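(* Let $(G,\tau,\partial)$ be a Polish topometric group. Then for every $\tau$-open $U\subseteq G$ and every $\varepsilon>0$, $(U)_\varepsilon=(1)_\varepsilon\cdot U$ and this set is $\tau$-open in $G$.
   Context: A Polish topometric group is a triple $(G,\tau,\partial)$ with $(G,\tau)$ a Polish group, $\partial$ a bi-invariant metric whose topology refines $\tau$ and which is $\tau$-lower semi-continuous. For $A\subseteq G$, $(A)_\varepsilon=\{g\colon\partial(g,A)<\varepsilon\}$, and $(1)_\varepsilon=(\{1_G\})_\varepsilon$. *)

theory Defs
  imports "HOL-Analysis.Analysis" "HOL-Algebra.Coset"
begin

definition Polish_space_top :: "'a topology \<Rightarrow> bool" where
  "Polish_space_top X \<longleftrightarrow> completely_metrizable_space X \<and> separable_space X"

definition Polish_group :: "('a, 'b) monoid_scheme \<Rightarrow> 'a topology \<Rightarrow> bool" where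
  "Polish_group G T \<longleftrightarrow>
     group G \<and> topspace T = carrier G \<and> Polish_space_top T \<and>
     continuous_map (prod_topology T T) T (\<lambda>(x, y). x \<otimes>\<^bsub>G\<^esub> y) \<and>
     continuous_map T T (\<lambda>x. inv\<^bsub>G\<^esub> x)"

text \<open>Polish topometric group (G, T, d): d is a bi-invariant metric on the carrier
  whose topology refines T and which is T-lower semicontinuous (on T x T).\<close>
definition Polish_topometric_group ::
  "('a, 'b) monoid_scheme \<Rightarrow> 'a topology \<Rightarrow> ('a \<Rightarrow> 'a \<Rightarrow> real) \<Rightarrow> bool" where
  "Polish_topometric_group G T d \<longleftrightarrow>
     Polish_group G T \<and>
     Metric_space (carrier G) d \<and>
     (\<forall>g\<in>carrier G. \<forall>x\<in>carrier G. \<forall>y\<in>carrier G.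
        d (g \<otimes>\<^bsub>G\<^esub> x) (g \<otimes>\<^bsub>G\<^esub> y) = d x y \<and>
        d (x \<otimes>\<^bsub>G\<^esub> g) (y \<otimes>\<^bsub>G\<^esub> g) = d x y) \<and>
     (\<forall>U. openin T U \<longrightarrow> openin (Metric_space.mtopology (carrier G) d) U) \<and>
     (\<forall>a. openin (prod_topology T T) {p \<in> topspace (prod_topology T T). d (fst p) (snd p) > a})"

text \<open>Distance from a point to a set, as an extended real (infinite for the empty set).\<close>
definition setdist_tm :: "('a \<Rightarrow> 'a \<Rightarrow> real) \<Rightarrow> 'a \<Rightarrow> 'a set \<Rightarrow> ereal" where
  "setdist_tm d g A = (INF a\<in>A. ereal (d g a))"

definition tm_nbhd :: "('a, 'b) monoid_scheme \<Rightarrow> ('a \<Rightarrow> 'a \<Rightarrow> real) \<Rightarrow> 'a set \<Rightarrow> real \<Rightarrow> 'a set" where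
  "tm_nbhd G d A \<epsilon> = {g \<in> carrier G. setdist_tm d g A < ereal \<epsilon>}"

end

theory Submission
  imports Defs
begin

text \<open>Openness needs only continuity of left translations:
  \<open>(1)\<^sub>\<epsilon> \<cdot> U\<close> is the union of the translates \<open>h \<cdot> U\<close>, each the preimage of \<open>U\<close>
  under \<open>x \<mapsto> h\<^sup>-\<^sup>1 x\<close>.\<close>

lemma setdist_tm_less_iff: "setdist_tm d g A < ereal e \<longleftrightarrow> (\<exists>a\<in>A. d g a < e)"
  unfolding setdist_tm_def by (simp add: INF_less_iff)

lemma tm_nbhd_iff: "g \<in> tm_nbhd G d A e \<longleftrightarrow> g \<in> carrier G \<and> (\<exists>a\<in>A. d g a < e)"
  unfolding tm_nbhd_def by (simp add: setdist_tm_less_iff)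

lemma tm_nbhd_singleton: "tm_nbhd G d {x} e = {g \<in> carrier G. d g x < e}"
  by (auto simp: tm_nbhd_iff)

lemma set_mult_eq_UN_l_coset: "H <#>\<^bsub>G\<^esub> K = (\<Union>h\<in>H. h <#\<^bsub>G\<^esub> K)"
  unfolding set_mult_def l_coset_def by simp

lemma (in group) l_coset_eq_preimage:
  assumes "h \<in> carrier G" and "K \<subseteq> carrier G"
  shows "h <# K = {x \<in> carrier G. inv h \<otimes> x \<in> K}"
proof (intro Set.set_eqI iffI)
  fix x assume "x \<in> h <# K"
  then obtain k where "k \<in> K" "x = h \<otimes> k" unfolding l_coset_def by blast
  with assms show "x \<in> {x \<in> carrier G. inv h \<otimes> x \<in> K}"
    by (auto simp: inv_mult_group m_assoc[symmetric])
next
  fix x assume "x \<in> {x \<in> carrier G. inv h \<otimes> x \<in> K}"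
  then have "x \<in> carrier G" "inv h \<otimes> x \<in> K" by auto
  moreover have "x = h \<otimes> (inv h \<otimes> x)"
    using assms(1) \<open>x \<in> carrier G\<close> by (simp add: m_assoc[symmetric])
  ultimately show "x \<in> h <# K" unfolding l_coset_def by blast
qed

lemma (in group) continuous_map_left_translation:
  assumes "topspace T = carrier G"
    and "continuous_map (prod_topology T T) T (\<lambda>(x, y). x \<otimes> y)"
    and "h \<in> carrier G"
  shows "continuous_map T T (\<lambda>x. h \<otimes> x)"
proof -
  have "continuous_map T (prod_topology T T) (\<lambda>x. (h, x))"
    using assms(1,3) by (simp add: continuous_map_pairwise o_def)
  from continuous_map_compose[OF this assms(2)] show ?thesis
    by (simp add: o_def)
qed

lemma (in group) openin_set_mult_left:
  assumes "topspace T = carrier G"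
    and "\<And>h. h \<in> carrier G \<Longrightarrow> continuous_map T T (\<lambda>x. h \<otimes> x)"
    and "H \<subseteq> carrier G" and "openin T U"
  shows "openin T (H <#> U)"
proof -
  have open_coset: "openin T (h <# U)" if "h \<in> H" for h
  proof -
    have "h <# U = {x \<in> topspace T. inv h \<otimes> x \<in> U}"
      using that assms(1,3) openin_subset[OF assms(4)] by (simp add: l_coset_eq_preimage subsetD)
    then show ?thesis
      using openin_continuous_map_preimage[OF assms(2) assms(4)] that assms(3) by auto
  qed
  show ?thesis
    unfolding set_mult_eq_UN_l_coset by (rule openin_Union) (auto intro: open_coset)
qed

lemma (in group) tm_nbhd_eq_set_mult:
  assumes right_inv: "\<And>g x y. \<lbrakk>g \<in> carrier G; x \<in> carrier G; y \<in> carrier G\<rbrakk>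
                          \<Longrightarrow> d (x \<otimes> g) (y \<otimes> g) = d x y"
    and "A \<subseteq> carrier G"
  shows "tm_nbhd G d A e = tm_nbhd G d {\<one>} e <#> A"
proof (intro Set.set_eqI iffI)
  fix g assume "g \<in> tm_nbhd G d A e"
  then obtain a where g: "g \<in> carrier G" and "a \<in> A" and "d g a < e"
    by (auto simp: tm_nbhd_iff)
  then have a: "a \<in> carrier G" using assms(2) by auto
  have "d (g \<otimes> inv a) \<one> = d (g \<otimes> inv a) (a \<otimes> inv a)" using a by simp
  also have "\<dots> = d g a" using right_inv[of "inv a" g a] g a by simp
  finally have "g \<otimes> inv a \<in> tm_nbhd G d {\<one>} e"
    using \<open>d g a < e\<close> g a by (simp add: tm_nbhd_singleton)
  moreover have "g = (g \<otimes> inv a) \<otimes> a" using g a by (simp add: m_assoc)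
  ultimately show "g \<in> tm_nbhd G d {\<one>} e <#> A"
    using \<open>a \<in> A\<close> unfolding set_mult_def by blast
next
  fix g assume "g \<in> tm_nbhd G d {\<one>} e <#> A"
  then obtain h a where h: "h \<in> carrier G" "d h \<one> < e" and "a \<in> A" and g: "g = h \<otimes> a"
    unfolding set_mult_def by (auto simp: tm_nbhd_singleton)
  then have a: "a \<in> carrier G" using assms(2) by auto
  have "d (h \<otimes> a) a = d (h \<otimes> a) (\<one> \<otimes> a)" using a by simp
  also have "\<dots> = d h \<one>" using right_inv[of a h \<one>] h a by simp
  finally show "g \<in> tm_nbhd G d A e"
    using g h a \<open>a \<in> A\<close> by (auto simp: tm_nbhd_iff intro!: bexI[of _ a])
qed

theorem lemma5p4:
  fixes G :: "('a, 'b) monoid_scheme" and T :: "'a topology" and d :: "'a \<Rightarrow> 'a \<Rightarrow> real"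
  assumes "Polish_topometric_group G T d"
    and "openin T U"
    and "\<epsilon> > 0"
  shows "tm_nbhd G d U \<epsilon> = tm_nbhd G d {\<one>\<^bsub>G\<^esub>} \<epsilon> <#>\<^bsub>G\<^esub> U
         \<and> openin T (tm_nbhd G d U \<epsilon>)"
proof -
  have "group G" and top: "topspace T = carrier G"
    and mult: "continuous_map (prod_topology T T) T (\<lambda>(x, y). x \<otimes>\<^bsub>G\<^esub> y)"
    and right_inv: "\<And>g x y. \<lbrakk>g \<in> carrier G; x \<in> carrier G; y \<in> carrier G\<rbrakk>
                       \<Longrightarrow> d (x \<otimes>\<^bsub>G\<^esub> g) (y \<otimes>\<^bsub>G\<^esub> g) = d x y"
    using assms(1) unfolding Polish_topometric_group_def Polish_group_def by auto
  interpret group G by fact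
  have U: "U \<subseteq> carrier G" using openin_subset[OF assms(2)] top by simp
  have eq: "tm_nbhd G d U \<epsilon> = tm_nbhd G d {\<one>\<^bsub>G\<^esub>} \<epsilon> <#>\<^bsub>G\<^esub> U"
    using tm_nbhd_eq_set_mult[of d, OF right_inv U] .
  have "openin T (tm_nbhd G d {\<one>\<^bsub>G\<^esub>} \<epsilon> <#>\<^bsub>G\<^esub> U)"
    by (rule openin_set_mult_left[OF top continuous_map_left_translation[OF top mult] _ assms(2)])
       (auto simp: tm_nbhd_def)
  with eq show ?thesis by simp
qed

end
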